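(* The map $\int:\mathbb L\to\mathcal L$, $\int(u+\varepsilon\tilde u)=\int u\,dx$, is a morphism of sheaves of dg Lie algebras (with $\mathcal L$ carrying zero differential) and a weak equivalence. Concretely, for every connected coordinate open set $U$, $\int$ induces an isomorphism of graded Lie algebras $H(\mathbb L(U),D)\cong\mathcal L(U)$; equivalently, an element $u\in\Lambda_\infty(U)$ satisfies $\partial_x u=0$ if and only if $u$ is a constant multiple of $1$.
   Context: Let $X$ be a complex manifold of dimension $n$; on a coordinate open set $U$ with coordinates $t^1,\dots,t^n$, $\Lambda_\infty(U)$ is the graded-commutative algebra over $\mathcal O(U)$ generated by even variables $t^a_k$ ($k\ge1$) and odd variables $\theta_{k,a}$ ($k\ge0$); set $t^a_0=t^a$. Grading: a monomial with $p+1$ factors $\theta_{k,a}$ has degree $p$ (constants have degree $-1$). Write $\partial_{k,a}=\partial/\partial t^a_k$, $\partial^a_k=\partial/\partial\theta_{k,a}$ (left odd derivative), and total derivative $\partial_x=\sum_{k\ge0}(t^a_{k+1}\partial_{k,a}+\theta_{k+1,a}\partial^a_k)$. The bracket is $[u,v]_\infty=\sum_{k,\ell\ge0}\big((-1)^{|u|}\partial_x^\ell(\partial^a_ku)\,\partial_x^k(\partial_{\ell,a}v)-\partial_x^\ell(\partial_{k,a}u)\,\partial_x^k(\partial^a_\ell v)\big)$, making $\Lambda_\infty$ a sheaf of graded Lie algebras (these constructions are invariant under holomorphic coordinate changes). $\mathcal L=\Lambda_\infty/\partial_x\Lambda_\infty$ with projection $u\mapsto\int u\,dx$ and bracket $\llbracket\int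 u\,dx,\int v\,dx\rrbracket=\int[u,v]_\infty dx$. $\tilde\Lambda_\infty=\Lambda_\infty/\mathbb C\cdot1$. $\mathbb L=\Lambda_\infty\oplus\varepsilon\tilde\Lambda_\infty$, where $\varepsilon\tilde u$ has degree $\deg\tilde u-1$, with differential $D(u+\varepsilon\tilde u)=\partial_x\tilde u$ and bracket $[u+\varepsilon\tilde u,v+\varepsilon\tilde v]_\infty=[u,v]_\infty+\varepsilon([\tilde u,v]_\infty+(-1)^{|u|}[u,\tilde v]_\infty)$. A weak equivalence of sheaves of dg Lie algebras is a morphism inducing isomorphisms on cohomology sheaves. *)

theory Defs
  imports "HOL-Analysis.Analysis" "HOL-Library.Multiset"
begin

text \<open>Local model of Lambda_infinity(U) on a coordinate open set U of (complex, 'n) vec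
  (coordinates t^a, a :: 'n).  Variables are indexed by pairs (k,a) :: nat \<times> 'n:
  the even variable t^a_k (k \<ge> 1) and the odd variable theta_{k,a} (k \<ge> 0).
  A monomial is (E,S): a multiset E of even variables and a finite set S of odd
  variables; the odd variables are written in increasing order w.r.t. lessV,
  after the (central) even ones.\<close>

type_synonym 'n var = "nat \<times> 'n"
type_synonym 'n mono = "'n var multiset \<times> 'n var set"
type_synonym 'n elt = "'n mono \<Rightarrow> (complex, 'n) vec \<Rightarrow> complex"

definition holo :: "((complex, ('n::finite)) vec) set \<Rightarrow> ((complex, 'n) vec \<Rightarrow> complex) \<Rightarrow> bool" where
  "holo U f \<longleftrightarrow> (\<forall>x\<in>U. \<exists>L. linear L \<and> (\<forall>c v. L (c *s v) = c * L v)
                      \<and> (f has_derivative L) (at x))"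

definition supp :: "('n::finite) elt \<Rightarrow> 'n mono set" where
  "supp u = {m. u m \<noteq> (\<lambda>_. 0)}"

definition Lam :: "((complex, ('n::finite)) vec) set \<Rightarrow> 'n elt \<Rightarrow> bool" where
  "Lam U u \<longleftrightarrow> finite (supp u)
     \<and> (\<forall>m\<in>supp u. (\<forall>v \<in># fst m. fst v \<ge> 1) \<and> finite (snd m))
     \<and> (\<forall>m. holo U (u m) \<and> (\<forall>x. x \<notin> U \<longrightarrow> u m x = 0))"

definition ezero :: "('n::finite) elt" where "ezero = (\<lambda>m x. 0)"

definition econst :: "((complex, ('n::finite)) vec) set \<Rightarrow> complex \<Rightarrow> 'n elt" where
  "econst U c = (\<lambda>m x. if m = ({#}, {}) \<and> x \<in> U then c else 0)"

definition eadd :: "('n::finite) elt \<Rightarrow> 'n elt \<Rightarrow> 'n elt" where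
  "eadd u v = (\<lambda>m x. u m x + v m x)"

definition esub :: "('n::finite) elt \<Rightarrow> 'n elt \<Rightarrow> 'n elt" where
  "esub u v = (\<lambda>m x. u m x - v m x)"

definition lessV :: "('n::linorder) var \<Rightarrow> 'n var \<Rightarrow> bool" where
  "lessV i j \<longleftrightarrow> fst i < fst j \<or> (fst i = fst j \<and> snd i < snd j)"

text \<open>sign of moving theta_j to the front of the ordered product over S\<close>
definition osign :: "('n::linorder) var set \<Rightarrow> 'n var \<Rightarrow> complex" where
  "osign S j = (-1) ^ card {i\<in>S. lessV i j}"

text \<open>sign for reordering theta_{S1} theta_{S2} into increasing order\<close>
definition msign :: "('n::linorder) var set \<Rightarrow> 'n var set \<Rightarrow> complex" where
  "msign S1 S2 = (-1) ^ card {(i,j). i \<in> S1 \<and> j \<in> S2 \<and> lessV j i}"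

definition pd :: "((complex, ('n::finite)) vec) set \<Rightarrow> 'n \<Rightarrow> ((complex, 'n) vec \<Rightarrow> complex) \<Rightarrow> (complex, 'n) vec \<Rightarrow> complex" where
  "pd U a f = (\<lambda>x. if x \<in> U then deriv (\<lambda>z. f (\<chi> b. if b = a then z else x $ b)) (x $ a) else 0)"

text \<open>\<partial>_{k,a} = \<partial>/\<partial>t^a_k  (t^a_0 = t^a)\<close>
definition dEven :: "((complex, ('n::finite)) vec) set \<Rightarrow> nat \<Rightarrow> 'n \<Rightarrow> 'n elt \<Rightarrow> 'n elt" where
  "dEven U k a u = (\<lambda>(E,S). if k = 0 then pd U a (u (E,S))
      else (\<lambda>x. of_nat (count E (k,a) + 1) * u (add_mset (k,a) E, S) x))"

text \<open>\<partial>^a_k = \<partial>/\<partial>theta_{k,a} (left derivative)\<close>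
definition dOdd :: "nat \<Rightarrow> ('n::{finite,linorder}) \<Rightarrow> 'n elt \<Rightarrow> 'n elt" where
  "dOdd k a u = (\<lambda>(E,S). if (k,a) \<in> S then (\<lambda>_. 0)
      else (\<lambda>x. osign S (k,a) * u (E, insert (k,a) S) x))"

text \<open>total derivative \<partial>_x = \<Sum>_k (t^a_{k+1} \<partial>_{k,a} + theta_{k+1,a} \<partial>^a_k)\<close>
definition dx :: "((complex, ('n::{finite,linorder})) vec) set \<Rightarrow> 'n elt \<Rightarrow> 'n elt" where
  "dx U u = (\<lambda>(E,S) x.
      (\<Sum>v\<in>{v. (Suc (fst v), snd v) \<in># E}.
          dEven U (fst v) (snd v) u (E - {#(Suc (fst v), snd v)#}, S) x)
    + (\<Sum>v\<in>{v. (Suc (fst v), snd v) \<in> S}.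
          osign S (Suc (fst v), snd v) * dOdd (fst v) (snd v) u (E, S - {(Suc (fst v), snd v)}) x))"

definition mul :: "('n::{finite,linorder}) elt \<Rightarrow> 'n elt \<Rightarrow> 'n elt" where
  "mul u v = (\<lambda>(E,S) x.
     \<Sum>p\<in>{p \<in> supp u \<times> supp v. fst (fst p) + fst (snd p) = E
             \<and> snd (fst p) \<inter> snd (snd p) = {} \<and> snd (fst p) \<union> snd (snd p) = S}.
        msign (snd (fst p)) (snd (snd p)) * u (fst p) x * v (snd p) x)"

text \<open>u \<mapsto> (-1)^{|u|} u on homogeneous components (degree = card S - 1)\<close>
definition sigma :: "('n::finite) elt \<Rightarrow> 'n elt" where
  "sigma u = (\<lambda>m x. (-1) ^ (card (snd m) + 1) * u m x)"

definition bterm :: "((complex, ('n::{finite,linorder})) vec) set \<Rightarrow> 'n elt \<Rightarrow> 'n elt \<Rightarrow> nat \<times> nat \<times> 'n \<Rightarrow> 'n elt" where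
  "bterm U u v p = (case p of (k, l, a) \<Rightarrow>
     esub (mul ((dx U ^^ l) (dOdd k a (sigma u))) ((dx U ^^ k) (dEven U l a v)))
          (mul ((dx U ^^ l) (dEven U k a u)) ((dx U ^^ k) (dOdd l a v))))"

text \<open>the bracket [u,v]_\<infinity> (the sum has finitely many nonzero terms)\<close>
definition bracket :: "((complex, ('n::{finite,linorder})) vec) set \<Rightarrow> 'n elt \<Rightarrow> 'n elt \<Rightarrow> 'n elt" where
  "bracket U u v = (\<lambda>m x. \<Sum>p\<in>{p. bterm U u v p \<noteq> ezero}. bterm U u v p m x)"

text \<open>\<bbbL>(U) = \<Lambda>(U) \<oplus> \<epsilon> (\<Lambda>(U)/\<complex>\<cdot>1): pairs (u, \<tilde>u) with \<tilde>u taken modulo constants\<close>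
definition LL :: "((complex, ('n::finite)) vec) set \<Rightarrow> 'n elt \<times> 'n elt \<Rightarrow> bool" where
  "LL U w \<longleftrightarrow> Lam U (fst w) \<and> Lam U (snd w)"

definition Leq :: "((complex, ('n::finite)) vec) set \<Rightarrow> 'n elt \<times> 'n elt \<Rightarrow> 'n elt \<times> 'n elt \<Rightarrow> bool" where
  "Leq U w w' \<longleftrightarrow> fst w = fst w' \<and> (\<exists>c. snd w = eadd (snd w') (econst U c))"

definition Lzero :: "('n::finite) elt \<times> 'n elt" where "Lzero = (ezero, ezero)"

definition DL :: "((complex, ('n::{finite,linorder})) vec) set \<Rightarrow> 'n elt \<times> 'n elt \<Rightarrow> 'n elt \<times> 'n elt" where
  "DL U w = (dx U (snd w), ezero)"

definition bracketL :: "((complex, ('n::{finite,linorder})) vec) set \<Rightarrow> 'n elt \<times> 'n elt \<Rightarrow> 'n elt \<times> 'n elt \<Rightarrow> 'n elt \<times> 'n elt" where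
  "bracketL U w1 w2 = (bracket U (fst w1) (fst w2),
      eadd (bracket U (snd w1) (fst w2)) (bracket U (sigma (fst w1)) (snd w2)))"

end

theory Submission
  imports Defs
begin

(* The total derivative raises the level of one variable at a time. Suppose no monomial of u
   contains t^a_(N+1) or theta_(N+1,a). Replacing a factor t^a_N (N >= 1) resp. theta_(N,a) of a
   monomial m by t^a_(N+1) resp. theta_(N+1,a) gives a monomial whose coefficient in d_x u is a
   nonzero multiple (a multiplicity resp. a sign) of the coefficient of u at m. So if d_x u = 0,
   descending induction on the level shows that u involves no jet variable, i.e. u = f(t); then
   the coefficient of t^a_1 in d_x u is the partial derivative of f in t^a, and f is constant on
   the connected set U. *)

lemma bounded_linear_axis: "bounded_linear (axis a :: complex \<Rightarrow> (complex, 'n::finite) vec)"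
proof -
  have "linear (axis a :: complex \<Rightarrow> (complex, 'n) vec)"
    by (rule linearI) (auto simp: axis_def vec_eq_iff)
  then show ?thesis
    by (simp add: linear_conv_bounded_linear)
qed

lemma coordinate_line_eq:
  "(\<chi> b. if b = a then z else x $ b) = (x - axis a (x $ a)) + axis a (z :: complex)"
  by (auto simp: axis_def vec_eq_iff)

lemma deriv_coordinate_restriction:
  fixes f :: "(complex, 'n::finite) vec \<Rightarrow> complex"
  assumes "linear L" and L_hom: "\<And>c v. L (c *s v) = c * L v" and f: "(f has_derivative L) (at x)"
  shows "deriv (\<lambda>z. f (\<chi> b. if b = a then z else x $ b)) (x $ a) = L (axis a 1)"
proof -
  define l where "l z = (x - axis a (x $ a)) + axis a z" for z :: complex
  have restriction: "(\<lambda>z. f (\<chi> b. if b = a then z else x $ b)) = f \<circ> l"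
    by (simp add: l_def coordinate_line_eq o_def)
  have "(l has_derivative axis a) (at (x $ a))"
    unfolding l_def
    by (auto intro!: derivative_eq_intros bounded_linear.has_derivative[OF bounded_linear_axis])
  moreover have "l (x $ a) = x"
    by (auto simp: l_def axis_def vec_eq_iff)
  ultimately have "(f \<circ> l has_derivative L \<circ> axis a) (at (x $ a))"
    using f diff_chain_at by metis
  moreover have "L \<circ> axis a = (*) (L (axis a 1))"
  proof
    fix h :: complex
    have "axis a h = h *s axis a 1" by (auto simp: axis_def vec_eq_iff)
    then show "(L \<circ> axis a) h = L (axis a 1) * h" by (simp add: L_hom)
  qed
  ultimately have "(f \<circ> l has_field_derivative L (axis a 1)) (at (x $ a))"
    by (simp add: has_field_derivative_def)
  then show ?thesis
    unfolding restriction by (rule DERIV_imp_deriv)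
qed

lemma holo_constant_on_if_pd_eq_0:
  fixes U :: "(complex, 'n::finite) vec set"
  assumes "open U" "connected U" "holo U f" and pd_0: "\<And>a x. x \<in> U \<Longrightarrow> pd U a f x = 0"
  shows "f constant_on U"
proof -
  have "(f has_derivative (\<lambda>_. 0)) (at x)" if "x \<in> U" for x
  proof -
    obtain L where "linear L" and L_hom: "\<And>c v. L (c *s v) = c * L v" and f: "(f has_derivative L) (at x)"
      using \<open>holo U f\<close> \<open>x \<in> U\<close> unfolding holo_def by blast
    have "L (axis a 1) = 0" for a
      using deriv_coordinate_restriction[OF \<open>linear L\<close> L_hom f] pd_0[OF \<open>x \<in> U\<close>, of a] \<open>x \<in> U\<close>
      by (simp add: pd_def)
    then have "L v = 0" for v
      using linear_sum[OF \<open>linear L\<close>, of "\<lambda>i. (v $ i) *s axis i 1" UNIV]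
      by (simp add: basis_expansion L_hom)
    then have "L = (\<lambda>_. 0)" by blast
    then show ?thesis
      using f by simp
  qed
  then show ?thesis
    using \<open>open U\<close> \<open>connected U\<close>
    by (intro has_derivative_zero_connected_constant_on[where K = "{}"])
       (auto intro: continuous_at_imp_continuous_on has_derivative_continuous has_derivative_at_withinI)
qed

lemma pd_zero [simp]: "pd U a (\<lambda>_. 0) = (\<lambda>_. 0)"
  by (simp add: pd_def fun_eq_iff)

lemma pd_const_on_open:
  fixes U :: "(complex, 'n::finite) vec set"
  assumes "open U"
  shows "pd U a (\<lambda>x. if x \<in> U then c else 0) = (\<lambda>_. 0)"
proof
  fix x
  show "pd U a (\<lambda>x. if x \<in> U then c else 0) x = 0"
  proof (cases "x \<in> U")
    case True
    define l where "l z = (x - axis a (x $ a)) + axis a z" for z :: complex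
    have "continuous_on UNIV l"
      unfolding l_def using bounded_linear_axis by (intro continuous_intros linear_continuous_on)
    then have "open (l -` U)"
      using \<open>open U\<close> by (simp add: continuous_on_open_vimage)
    moreover have "l (x $ a) = x"
      by (auto simp: l_def axis_def vec_eq_iff)
    moreover have "(\<chi> b. if b = a then z else x $ b) = l z" for z
      by (simp add: l_def coordinate_line_eq)
    ultimately have "((\<lambda>z. if (\<chi> b. if b = a then z else x $ b) \<in> U then c else 0) has_field_derivative 0) (at (x $ a))"
      using True by (intro has_field_derivative_transform_within_open[OF DERIV_const, of "l -` U"]) auto
    then show ?thesis
      using True by (simp add: pd_def DERIV_imp_deriv)
  qed (simp add: pd_def)
qed

definition mono_vars :: "'n mono \<Rightarrow> 'n var set" where
  "mono_vars m = set_mset (fst m) \<union> snd m"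

lemma finite_lower_level: "finite A \<Longrightarrow> finite {v. (Suc (fst v), snd v) \<in> A}"
  by (rule finite_vimageI[of A "\<lambda>v. (Suc (fst v), snd v)", unfolded vimage_def])
     (auto simp: inj_def)

lemma dx_at_raised_even_var:
  fixes u :: "'n::{finite,linorder} elt"
  assumes vanish: "\<And>m. (Suc N, a) \<in> mono_vars m \<Longrightarrow> u m = (\<lambda>_. 0)" and "N \<noteq> 0"
  shows "dx U u (add_mset (Suc N, a) E, S) x = of_nat (count E (N, a) + 1) * u (add_mset (N, a) E, S) x"
proof -
  let ?E = "add_mset (Suc N, a) E"
  have odd_part: "(\<Sum>v\<in>{v. (Suc (fst v), snd v) \<in> S}.
      osign S (Suc (fst v), snd v) * dOdd (fst v) (snd v) u (?E, S - {(Suc (fst v), snd v)}) x) = 0"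
    by (intro sum.neutral) (auto simp: dOdd_def vanish mono_vars_def)
  have other_terms: "dEven U (fst v) (snd v) u (?E - {#(Suc (fst v), snd v)#}, S) x = 0"
    if "v \<noteq> (N, a)" for v
  proof -
    have "(Suc N, a) \<in># ?E - {#(Suc (fst v), snd v)#}"
      using that by (cases v) (simp add: diff_union_swap[symmetric])
    then show ?thesis
      by (auto simp: dEven_def vanish mono_vars_def)
  qed
  have "finite {v. (Suc (fst v), snd v) \<in># ?E}"
    using finite_lower_level[of "set_mset ?E"] by simp
  then have even_part: "(\<Sum>v\<in>{v. (Suc (fst v), snd v) \<in># ?E}.
      dEven U (fst v) (snd v) u (?E - {#(Suc (fst v), snd v)#}, S) x) = dEven U N a u (E, S) x"
    by (subst sum.mono_neutral_right[where S = "{(N, a)}"]) (use other_terms in auto)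
  show ?thesis
    unfolding dx_def using \<open>N \<noteq> 0\<close>
    by (simp only: prod.case odd_part even_part) (simp add: dEven_def)
qed

lemma dx_at_raised_odd_var:
  fixes u :: "'n::{finite,linorder} elt"
  assumes vanish: "\<And>m. (Suc N, a) \<in> mono_vars m \<Longrightarrow> u m = (\<lambda>_. 0)"
    and "finite S" "(N, a) \<notin> S" "(Suc N, a) \<notin> S"
  shows "dx U u (E, insert (Suc N, a) S) x
    = osign (insert (Suc N, a) S) (Suc N, a) * osign S (N, a) * u (E, insert (N, a) S) x"
proof -
  let ?S = "insert (Suc N, a) S"
  have even_part: "(\<Sum>v\<in>{v. (Suc (fst v), snd v) \<in># E}.
      dEven U (fst v) (snd v) u (E - {#(Suc (fst v), snd v)#}, ?S) x) = 0"
    by (intro sum.neutral) (auto simp: dEven_def vanish mono_vars_def)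
  have other_terms: "osign ?S (Suc (fst v), snd v) * dOdd (fst v) (snd v) u (E, ?S - {(Suc (fst v), snd v)}) x = 0"
    if "v \<noteq> (N, a)" for v
  proof -
    have "(Suc N, a) \<in> insert v (?S - {(Suc (fst v), snd v)})"
      using that by (cases v) auto
    then show ?thesis
      by (cases v) (auto simp: dOdd_def vanish mono_vars_def)
  qed
  have "finite {v. (Suc (fst v), snd v) \<in> ?S}"
    using finite_lower_level \<open>finite S\<close> by blast
  then have odd_part: "(\<Sum>v\<in>{v. (Suc (fst v), snd v) \<in> ?S}.
      osign ?S (Suc (fst v), snd v) * dOdd (fst v) (snd v) u (E, ?S - {(Suc (fst v), snd v)}) x)
      = osign ?S (Suc N, a) * dOdd N a u (E, S) x"
    using \<open>(Suc N, a) \<notin> S\<close>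
    by (subst sum.mono_neutral_right[where S = "{(N, a)}"]) (use other_terms in auto)
  show ?thesis
    unfolding dx_def using \<open>(N, a) \<notin> S\<close>
    by (simp only: prod.case even_part odd_part) (simp add: dOdd_def)
qed

lemma dx_eq_ezero_level_descent:
  fixes u :: "'n::{finite,linorder} elt"
  assumes "Lam U u" "dx U u = ezero" and top: "\<And>m. m \<in> supp u \<Longrightarrow> (Suc N, a) \<notin> mono_vars m"
    and "m \<in> supp u"
  shows "(N, a) \<notin> mono_vars m"
proof
  assume "(N, a) \<in> mono_vars m"
  obtain E S where m: "m = (E, S)" by force
  have "finite S" and even_levels: "\<forall>v \<in># E. fst v \<ge> 1"
    using \<open>Lam U u\<close> \<open>m \<in> supp u\<close> by (auto simp: Lam_def m)
  have "(Suc N, a) \<notin> S"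
    using top[OF \<open>m \<in> supp u\<close>] by (simp add: m mono_vars_def)
  have vanish: "u m' = (\<lambda>_. 0)" if "(Suc N, a) \<in> mono_vars m'" for m'
    using top[of m'] that unfolding supp_def by blast
  have dx_0: "dx U u m' x = 0" for m' x
    using \<open>dx U u = ezero\<close> by (simp add: ezero_def)
  have "u m x = 0" for x
  proof (cases "(N, a) \<in># E")
    case True
    then obtain E' where E: "E = add_mset (N, a) E'"
      by (metis mset_add)
    have "N \<noteq> 0"
      using even_levels True by fastforce
    show ?thesis
      using dx_at_raised_even_var[where u = u and N = N and a = a and U = U and E = E' and S = S,
          OF vanish \<open>N \<noteq> 0\<close>] dx_0
      by (simp add: m E del: of_nat_add of_nat_Suc)
  next
    case False
    then have "(N, a) \<in> S"
      using \<open>(N, a) \<in> mono_vars m\<close> by (simp add: m mono_vars_def)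
    let ?S' = "S - {(N, a)}"
    have "insert (N, a) ?S' = S"
      using \<open>(N, a) \<in> S\<close> by blast
    then show ?thesis
      using dx_at_raised_odd_var[where u = u and N = N and a = a and S = ?S' and U = U and E = E,
          OF vanish] dx_0 \<open>finite S\<close> \<open>(Suc N, a) \<notin> S\<close>
      by (simp add: m osign_def)
  qed
  then show False
    using \<open>m \<in> supp u\<close> by (simp add: supp_def fun_eq_iff)
qed

lemma supp_subset_if_dx_eq_ezero:
  fixes u :: "'n::{finite,linorder} elt"
  assumes "Lam U u" "dx U u = ezero"
  shows "supp u \<subseteq> {({#}, {})}"
proof
  fix m assume "m \<in> supp u"
  define V where "V = (\<Union>m'\<in>supp u. mono_vars m')"
  have "finite V"
    using \<open>Lam U u\<close> by (auto simp: V_def Lam_def mono_vars_def)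
  then obtain B where "fst ` V \<subseteq> {..<B}"
    using finite_nat_bounded finite_imageI by blast
  then have B: "N < B" if "m' \<in> supp u" "(N, a) \<in> mono_vars m'" for m' N a
    using that unfolding V_def by force
  have "\<forall>m'\<in>supp u. (N, a) \<notin> mono_vars m'" for N a
  proof (cases "N < B")
    case True
    then have "N \<le> B" by simp
    then show ?thesis
    proof (induction rule: inc_induct)
      case base
      then show ?case using B by blast
    next
      case (step n)
      then show ?case
        using dx_eq_ezero_level_descent[OF assms] by blast
    qed
  next
    case False
    then show ?thesis using B by fastforce
  qed
  then have "mono_vars m = {}"
    using \<open>m \<in> supp u\<close> by (metis ex_in_conv prod.collapse)
  then show "m \<in> {({#}, {})}"
    by (cases m) (simp add: mono_vars_def)
qed

lemma dx_at_first_jet: "dx U u ({#(Suc 0, a)#}, {}) = pd U a (u ({#}, {}))"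
proof -
  have "{v. (Suc (fst v), snd v) \<in># {#(Suc 0, a)#}} = {(0, a)}"
    by auto
  then show ?thesis
    by (simp add: dx_def dEven_def fun_eq_iff)
qed

lemma dEven_econst:
  assumes "open U"
  shows "dEven U k a (econst U c) m = (\<lambda>_. 0)"
proof -
  have pd_econst: "pd U a (econst U c m') = (\<lambda>_. 0)" for m'
    using pd_const_on_open[OF assms] by (cases "m' = ({#}, {})") (simp_all add: econst_def)
  show ?thesis
    by (cases m) (simp add: dEven_def pd_econst, simp add: econst_def)
qed

lemma dOdd_econst: "dOdd k a (econst U c) m = (\<lambda>_. 0)"
  by (cases m) (simp add: dOdd_def econst_def)

lemma dx_econst: "open U \<Longrightarrow> dx U (econst U c) = ezero"
  by (simp add: dx_def dEven_econst dOdd_econst ezero_def case_prod_unfold)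

lemma dx_ezero: "dx U ezero = ezero"
proof -
  have "dEven U k a ezero m = (\<lambda>_. 0)" "dOdd k a ezero m = (\<lambda>_. 0)" for k a m
    by (cases m, simp add: dEven_def dOdd_def ezero_def)+
  then show ?thesis
    by (simp add: dx_def ezero_def case_prod_unfold)
qed

lemma Lam_ezero: "Lam U ezero"
proof -
  have "holo U (\<lambda>_. 0)"
    unfolding holo_def by (auto intro!: exI[where x = "\<lambda>_. 0"] linearI)
  then show ?thesis
    by (simp add: Lam_def ezero_def supp_def)
qed

lemma econst_0: "econst U 0 = ezero"
  by (simp add: econst_def ezero_def)

lemma eadd_ezero [simp]: "eadd u ezero = u" "eadd ezero u = u"
  by (simp_all add: eadd_def ezero_def)

lemma dx_eq_ezero_iff_econst:
  fixes U :: "(complex, 'n::{finite,linorder}) vec set"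
  assumes "open U" "connected U" "Lam U u"
  shows "dx U u = ezero \<longleftrightarrow> (\<exists>c. u = econst U c)"
proof
  assume "dx U u = ezero"
  have "u ({#}, {}) constant_on U"
  proof (rule holo_constant_on_if_pd_eq_0[OF \<open>open U\<close> \<open>connected U\<close>])
    show "holo U (u ({#}, {}))"
      using \<open>Lam U u\<close> by (simp add: Lam_def)
    show "pd U a (u ({#}, {})) x = 0" for a x
      using dx_at_first_jet[of U u a] \<open>dx U u = ezero\<close> by (simp add: ezero_def fun_eq_iff)
  qed
  then obtain c where c: "\<And>x. x \<in> U \<Longrightarrow> u ({#}, {}) x = c"
    by (auto simp: constant_on_def)
  have "u m x = econst U c m x" for m x
  proof (cases "m = ({#}, {})")
    case True
    then show ?thesis
      using c \<open>Lam U u\<close> by (auto simp: econst_def Lam_def)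
  next
    case False
    then have "m \<notin> supp u"
      using supp_subset_if_dx_eq_ezero[OF \<open>Lam U u\<close> \<open>dx U u = ezero\<close>] by blast
    then show ?thesis
      using False by (simp add: supp_def econst_def)
  qed
  then show "\<exists>c. u = econst U c"
    by blast
next
  assume "\<exists>c. u = econst U c"
  then show "dx U u = ezero"
    using dx_econst[OF \<open>open U\<close>] by blast
qed

theorem theorem5p1:
  fixes U :: "((complex, 'n::{finite,linorder}) vec) set"
  assumes "open U" and "connected U"
  shows
   "(\<forall>u. Lam U u \<longrightarrow> (dx U u = ezero \<longleftrightarrow> (\<exists>c. u = econst U c)))
  \<and> (\<forall>w. LL U w \<longrightarrow> (\<exists>v. Lam U v \<and> fst (DL U w) = dx U v))
  \<and> (\<forall>w1 w2. LL U w1 \<and> LL U w2 \<longrightarrow>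
        (\<exists>v. Lam U v \<and> fst (bracketL U w1 w2) = eadd (bracket U (fst w1) (fst w2)) (dx U v)))
  \<and> (\<forall>u. Lam U u \<longrightarrow> (\<exists>w. LL U w \<and> Leq U (DL U w) Lzero \<and> fst w = u))
  \<and> (\<forall>w. LL U w \<and> Leq U (DL U w) Lzero \<and> (\<exists>v. Lam U v \<and> fst w = dx U v)
        \<longrightarrow> (\<exists>w'. LL U w' \<and> Leq U w (DL U w')))"
proof (intro conjI allI impI)
  show "dx U u = ezero \<longleftrightarrow> (\<exists>c. u = econst U c)" if "Lam U u" for u
    using dx_eq_ezero_iff_econst[OF assms that] .
  show "\<exists>v. Lam U v \<and> fst (DL U w) = dx U v" if "LL U w" for w
    using that by (auto simp: LL_def DL_def)
  show "\<exists>v. Lam U v \<and> fst (bracketL U w1 w2) = eadd (bracket U (fst w1) (fst w2)) (dx U v)" for w1 w2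
    using Lam_ezero by (auto simp: bracketL_def dx_ezero intro!: exI[where x = ezero])
  show "\<exists>w. LL U w \<and> Leq U (DL U w) Lzero \<and> fst w = u" if "Lam U u" for u
    using that Lam_ezero dx_ezero econst_0[symmetric]
    by (simp add: LL_def DL_def Leq_def Lzero_def) blast
next
  fix w
  assume "LL U w \<and> Leq U (DL U w) Lzero \<and> (\<exists>v. Lam U v \<and> fst w = dx U v)"
  then obtain v c where "Lam U v" "fst w = dx U v" "snd w = econst U c"
    using dx_eq_ezero_iff_econst[OF assms, of "snd w"] by (auto simp: LL_def Leq_def DL_def Lzero_def)
  then show "\<exists>w'. LL U w' \<and> Leq U w (DL U w')"
    using Lam_ezero by (auto simp: LL_def Leq_def DL_def intro!: exI[where x = "(ezero, v)"])
qed

end
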